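(* Let $n\ge1$ and $m\ge1$ be integers and $q\in\mathbb{C}$. With $K_n(x,q)=(1+x)^{2n}+qx^n$ and $f_m(x)=(x^{2m+1}-1)/(x-1)$, \[ \Delta_x\big(K_n(x,q)f_m(x)\big)=C_m^{(n)}\,q^{2n-1}(q+2^{2n})\prod_{k=1}^{m}\big(q+(2\cos k\theta_m+2)^n\big)^4 = C_m^{(n)}\,q^{2n-1}(q+2^{2n})\,H_m^{(n)}(q)^4, \] where $C_m^{(n)}=(-1)^m(2m+1)^{2m-1}n^{2n}$.
   Context: For a polynomial $P(x)$ of degree $d$ with leading coefficient $a_d$ and roots $x_1,\dots,x_d$ (with multiplicity), its discriminant is $\Delta_x P=a_d^{2d-2}\prod_{1\le i<j\le d}(x_i-x_j)^2$. For integers $m\ge0$, $n\ge1$, let $\theta_m=2\pi/(2m+1)$ and $H_m^{(n)}(q)=\prod_{k=1}^{m}\big(q+(2\cos k\theta_m+2)^n\big)$ (so $H_0^{(n)}=1$). *)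

theory Defs
  imports Complex_Main "HOL-Computational_Algebra.Polynomial" "HOL-Computational_Algebra.Fundamental_Theorem_Algebra"
begin

text \<open>The product is symmetric, so the choice of enumeration of the root multiset is irrelevant.\<close>
definition disc :: "complex poly \<Rightarrow> complex" where
  "disc p = (let xs = (SOME xs. mset xs = proots p) in
     lead_coeff p ^ (2 * degree p - 2) *
     (\<Prod>(i, j) \<in> {(i, j). i < j \<and> j < length xs}. (xs ! i - xs ! j) ^ 2))"

definition theta :: "nat \<Rightarrow> real" where
  "theta m = 2 * pi / (2 * real m + 1)"

definition H :: "nat \<Rightarrow> nat \<Rightarrow> complex \<Rightarrow> complex" where
  "H m n q = (\<Prod>k = 1..m. q + complex_of_real ((2 * cos (real k * theta m) + 2) ^ n))"

definition K :: "nat \<Rightarrow> complex \<Rightarrow> complex poly" where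
  "K n q = [:1, 1:] ^ (2 * n) + smult q (monom 1 n)"

definition f :: "nat \<Rightarrow> complex poly" where
  "f m = (monom 1 (2 * m + 1) - 1) div [:-1, 1:]"

definition C :: "nat \<Rightarrow> nat \<Rightarrow> complex" where
  "C m n = (-1) ^ m * of_nat (2 * m + 1) ^ (2 * m - 1) * of_nat n ^ (2 * n)"

end

theory Submission
  imports Defs
begin

text \<open>For a monic polynomial with roots \<open>x\<^sub>i\<close> the discriminant is \<open>\<plusminus>\<Prod> p'(x\<^sub>i)\<close>, and
  \<open>\<Delta>(p q) = \<Delta>(p) \<Delta>(q) R(p, q)\<^sup>2\<close> with \<open>R(p, q) = \<Prod>\<^bsub>p(a) = 0\<^esub> q(a)\<close>.
  At a root \<open>a\<close> of \<open>K\<close> one has \<open>a K'(a) = n (1 + a)\<^bsup>2n-1\<^esup> (a - 1)\<close>, so \<open>\<Prod> K'(a)\<close> is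
  read off from the values \<open>K(0)\<close>, \<open>K(-1)\<close>, \<open>K(1)\<close>; similarly \<open>(b - 1) f'(b) = (2m + 1) b\<^bsup>2m\<^esup>\<close>
  at the roots of \<open>f\<close>. These roots are the nontrivial \<open>(2m+1)\<close>-th roots of unity
  \<open>\<zeta>\<^sup>k = cis (k \<theta>)\<close>, where \<open>K(\<zeta>\<^sup>k) = \<zeta>\<^bsup>kn\<^esup> (q + (2 cos k\<theta> + 2)\<^sup>n)\<close>; pairing \<open>k\<close> with
  \<open>2m + 1 - k\<close> turns the resultant into \<open>H\<^sup>2\<close>.\<close>

definition vandermonde_sq :: "'a::comm_ring_1 list \<Rightarrow> 'a" where
  "vandermonde_sq xs = (\<Prod>(i, j) \<in> {(i, j). i < j \<and> j < length xs}. (xs ! i - xs ! j) ^ 2)"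

lemma vandermonde_sq_Nil [simp]: "vandermonde_sq [] = 1"
  by (simp add: vandermonde_sq_def)

lemma vandermonde_sq_Cons:
  "vandermonde_sq (x # xs) = (\<Prod>y\<in>#mset xs. x - y) ^ 2 * vandermonde_sq xs"
proof -
  let ?n = "length xs"
  let ?S = "{(i, j). i < j \<and> j < ?n}"
  let ?g = "\<lambda>(i, j). ((x # xs) ! i - (x # xs) ! j) ^ 2"
  have pairs: "{(i, j). i < j \<and> j < Suc ?n} = (\<lambda>j. (0, Suc j)) ` {..<?n} \<union> map_prod Suc Suc ` ?S"
  proof (rule set_eqI, clarify)
    fix i j
    show "((i, j) \<in> {(i, j). i < j \<and> j < Suc ?n}) =
          ((i, j) \<in> (\<lambda>j. (0, Suc j)) ` {..<?n} \<union> map_prod Suc Suc ` ?S)"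
      by (cases i; cases j) (auto simp: image_iff)
  qed
  have "finite ?S"
    by (rule finite_subset[of _ "{..<?n} \<times> {..<?n}"]) auto
  then have "vandermonde_sq (x # xs) =
      prod ?g ((\<lambda>j. (0, Suc j)) ` {..<?n}) * prod ?g (map_prod Suc Suc ` ?S)"
    unfolding vandermonde_sq_def length_Cons pairs by (intro prod.union_disjoint) auto
  also have "prod ?g ((\<lambda>j. (0, Suc j)) ` {..<?n}) = (\<Prod>j<?n. x - xs ! j) ^ 2"
    by (subst prod.reindex) (auto simp: inj_on_def prod_power_distrib)
  also have "(\<Prod>j<?n. x - xs ! j) = (\<Prod>y\<in>#mset xs. x - y)"
    by (simp flip: mset_map add: prod_mset_prod_list prod.list_conv_set_nth atLeast0LessThan)
  also have "prod ?g (map_prod Suc Suc ` ?S) = vandermonde_sq xs"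
    unfolding vandermonde_sq_def by (subst prod.reindex) (auto simp: inj_on_def case_prod_beta)
  finally show ?thesis .
qed

lemma vandermonde_sq_append:
  "vandermonde_sq (xs @ ys) =
     vandermonde_sq xs * vandermonde_sq ys * (\<Prod>x\<in>#mset xs. \<Prod>y\<in>#mset ys. x - y) ^ 2"
  by (induction xs) (simp_all add: vandermonde_sq_Cons prod_mset.distrib power_mult_distrib mult_ac)

lemma vandermonde_sq_eq_prod_pderiv:
  fixes xs :: "'a::idom list"
  shows "(-1) ^ (length xs * (length xs - 1) div 2) * vandermonde_sq xs =
           (\<Prod>x\<in>#mset xs. poly (pderiv (\<Prod>y\<in>#mset xs. [:-y, 1:])) x)"
proof (induction xs)
  case (Cons x ys)
  define P where "P = (\<Prod>y\<in>#mset ys. [:-y, 1:])"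
  define l where "l = length ys"
  define s where "s = l * (l - 1) div 2"
  define A where "A = (\<Prod>y\<in>#mset ys. x - y)"
  have sign: "length (x # ys) * (length (x # ys) - 1) div 2 = s + l"
    unfolding s_def l_def by (cases ys) (simp_all add: algebra_simps)
  have "poly P x = A"
    unfolding P_def A_def by (simp add: poly_prod_mset image_mset.compositionality o_def)
  have P_roots: "poly P y = 0" if "y \<in># mset ys" for y
    unfolding P_def poly_prod_mset using that by (auto simp: image_iff)
  have pderiv_Cons: "pderiv (\<Prod>y\<in>#mset (x # ys). [:-y, 1:]) = P + [:-x, 1:] * pderiv P"
  proof -
    have "(\<Prod>y\<in>#mset (x # ys). [:-y, 1:]) = [:-x, 1:] * P"
      by (simp add: P_def)
    moreover have "pderiv [:-x, 1:] = 1"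
      by (simp add: pderiv_pCons)
    ultimately show ?thesis
      by (simp only: pderiv_mult mult_1_right add.commute)
  qed
  have "(\<Prod>y\<in>#mset ys. poly (P + [:-x, 1:] * pderiv P) y) =
        (\<Prod>y\<in>#mset ys. (-1) * (x - y) * poly (pderiv P) y)"
    by (intro arg_cong[where f = prod_mset] image_mset_cong) (simp add: P_roots algebra_simps)
  also have "\<dots> = (-1) ^ l * A * (\<Prod>y\<in>#mset ys. poly (pderiv P) y)"
    by (simp only: prod_mset.distrib prod_mset_constant size_mset A_def l_def)
  also have "\<dots> = (-1) ^ l * A * ((-1) ^ s * vandermonde_sq ys)"
    using Cons.IH by (simp add: P_def l_def s_def)
  finally have "(\<Prod>y\<in>#mset ys. poly (P + [:-x, 1:] * pderiv P) y) =
      (-1) ^ l * A * ((-1) ^ s * vandermonde_sq ys)" .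
  then have "(\<Prod>z\<in>#mset (x # ys). poly (pderiv (\<Prod>y\<in>#mset (x # ys). [:-y, 1:])) z) =
      A * ((-1) ^ l * A * ((-1) ^ s * vandermonde_sq ys))"
    unfolding pderiv_Cons using \<open>poly P x = A\<close> by simp
  also have "\<dots> = (-1) ^ (s + l) * vandermonde_sq (x # ys)"
    by (simp add: vandermonde_sq_Cons A_def power_add power2_eq_square)
  finally show ?case
    unfolding sign by (rule sym)
qed simp

lemma vandermonde_sq_mset_cong:
  fixes xs ys :: "'a::idom list"
  assumes "mset xs = mset ys"
  shows "vandermonde_sq xs = vandermonde_sq ys"
proof -
  \<comment> \<open>the right-hand side of \<open>vandermonde_sq_eq_prod_pderiv\<close> depends only on \<open>mset xs\<close>\<close>
  have "length xs = length ys"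
    using assms by (metis size_mset)
  then have "(-1) ^ (length xs * (length xs - 1) div 2) * vandermonde_sq xs =
             (-1) ^ (length xs * (length xs - 1) div 2) * vandermonde_sq ys"
    using vandermonde_sq_eq_prod_pderiv[of xs] vandermonde_sq_eq_prod_pderiv[of ys] assms by simp
  then show ?thesis
    by simp
qed

lemma prod_mset_power_distrib: "(\<Prod>x\<in>#A. g x ^ k) = (\<Prod>x\<in>#A. g x) ^ k"
  by (induction A) (simp_all add: power_mult_distrib)

lemma poly_monic_eq_prod_proots:
  fixes p :: "complex poly"
  assumes "lead_coeff p = 1"
  shows "poly p c = (\<Prod>a\<in>#proots p. c - a)"
proof -
  have "poly p c = poly (\<Prod>a\<in>#proots p. [:-a, 1:]) c"
    using complex_poly_decompose_multiset[of p] assms by simp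
  then show ?thesis
    by (simp add: poly_prod_mset image_mset.compositionality o_def)
qed

lemma prod_proots_diff:
  fixes p :: "complex poly"
  assumes "lead_coeff p = 1"
  shows "(\<Prod>a\<in>#proots p. a - c) = (-1) ^ degree p * poly p c"
proof -
  have "(\<Prod>a\<in>#proots p. a - c) = (\<Prod>a\<in>#proots p. (-1) * (c - a))"
    by simp
  also have "\<dots> = (-1) ^ degree p * poly p c"
    by (simp only: prod_mset.distrib prod_mset_constant size_proots_complex
        poly_monic_eq_prod_proots[OF assms])
  finally show ?thesis .
qed

lemma prod_poly_proots_swap:
  fixes p q :: "complex poly"
  assumes "lead_coeff p = 1" "lead_coeff q = 1"
  shows "(\<Prod>a\<in>#proots p. poly q a) = (-1) ^ (degree p * degree q) * (\<Prod>b\<in>#proots q. poly p b)"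
proof -
  have "(\<Prod>a\<in>#proots p. poly q a) = (\<Prod>b\<in>#proots q. \<Prod>a\<in>#proots p. a - b)"
    unfolding poly_monic_eq_prod_proots[OF assms(2)] by (rule prod_mset.swap)
  also have "\<dots> = (\<Prod>b\<in>#proots q. (-1) ^ degree p * poly p b)"
    by (simp only: prod_proots_diff[OF assms(1)])
  also have "\<dots> = (-1) ^ (degree p * degree q) * (\<Prod>b\<in>#proots q. poly p b)"
    by (simp add: prod_mset.distrib size_proots_complex power_mult)
  finally show ?thesis .
qed

lemma proots_eq_mset_set:
  fixes p :: "'a::idom poly"
  assumes "p \<noteq> 0" and "finite A" and "\<And>x. x \<in> A \<Longrightarrow> poly p x = 0" and "card A = degree p"
  shows "proots p = mset_set A"
proof -
  have sub: "mset_set A \<subseteq># proots p"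
    using assms by (auto simp: subseteq_mset_def count_mset_set' Suc_le_eq order_root)
  moreover have "size (proots p) \<le> size (mset_set A)"
    using size_proots_le[of p] assms(4) by simp
  ultimately show ?thesis
    by (metis mset_subset_size not_le subset_mset.le_neq_trans)
qed

lemma disc_monic_eq_vandermonde_sq:
  assumes "lead_coeff p = 1" and "mset xs = proots p"
  shows "disc p = vandermonde_sq xs"
proof -
  have "mset (SOME xs. mset xs = proots p) = proots p"
    by (rule someI_ex) (rule ex_mset)
  then show ?thesis
    unfolding disc_def Let_def vandermonde_sq_def[symmetric]
    using assms by (simp add: vandermonde_sq_mset_cong)
qed

lemma disc_monic_eq_prod_pderiv:
  assumes "lead_coeff p = 1"
  shows "disc p = (-1) ^ (degree p * (degree p - 1) div 2) * (\<Prod>x\<in>#proots p. poly (pderiv p) x)"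
proof -
  obtain xs where xs: "mset xs = proots p"
    using ex_mset by blast
  let ?s = "(-1 :: complex) ^ (degree p * (degree p - 1) div 2)"
  have "length xs = degree p"
    by (metis xs size_mset size_proots_complex)
  moreover have "(\<Prod>y\<in>#mset xs. [:-y, 1:]) = p"
    using complex_poly_decompose_multiset[of p] assms xs by simp
  ultimately have "?s * disc p = (\<Prod>x\<in>#proots p. poly (pderiv p) x)"
    using vandermonde_sq_eq_prod_pderiv[of xs] disc_monic_eq_vandermonde_sq[OF assms xs] xs by simp
  moreover have "?s * ?s = 1"
    by (simp flip: power_mult_distrib)
  ultimately show ?thesis
    by (metis mult.assoc mult_1)
qed

lemma disc_mult_monic:
  fixes p q :: "complex poly"
  assumes "lead_coeff p = 1" and "lead_coeff q = 1"
  shows "disc (p * q) = disc p * disc q * (\<Prod>a\<in>#proots p. poly q a) ^ 2"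
proof -
  obtain xs ys where xs: "mset xs = proots p" and ys: "mset ys = proots q"
    using ex_mset by metis
  have "p \<noteq> 0" "q \<noteq> 0"
    using assms by auto
  then have "mset (xs @ ys) = proots (p * q)"
    by (simp add: xs ys proots_mult)
  then have "disc (p * q) = vandermonde_sq (xs @ ys)"
    using assms by (simp add: disc_monic_eq_vandermonde_sq lead_coeff_mult)
  moreover have "(\<Prod>a\<in>#proots p. poly q a) = (\<Prod>x\<in>#mset xs. \<Prod>y\<in>#mset ys. x - y)"
    by (simp add: xs ys poly_monic_eq_prod_proots[OF assms(2)])
  ultimately show ?thesis
    by (simp add: vandermonde_sq_append disc_monic_eq_vandermonde_sq[OF assms(1) xs]
        disc_monic_eq_vandermonde_sq[OF assms(2) ys])
qed

lemma poly_K: "poly (K n q) x = (1 + x) ^ (2 * n) + q * x ^ n"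
  by (simp add: K_def poly_monom)

lemma
  assumes "n \<ge> 1"
  shows degree_K: "degree (K n q) = 2 * n"
    and lead_coeff_K: "lead_coeff (K n q) = 1"
proof -
  have "degree ([:1, 1:] ^ (2 * n) :: complex poly) = 2 * n"
    by (simp add: degree_power_eq)
  moreover have "degree (monom q n) < 2 * n"
    using assms by (intro le_less_trans[OF degree_monom_le]) simp
  ultimately show deg: "degree (K n q) = 2 * n"
    by (simp add: K_def smult_monom degree_add_eq_left)
  have "coeff ([:1, 1:] ^ (2 * n) :: complex poly) (2 * n) = 1"
    using lead_coeff_power[of "[:1, 1:] :: complex poly" "2 * n"] by (simp add: degree_power_eq)
  then have "coeff (K n q) (2 * n) = 1"
    using assms by (simp add: K_def coeff_monom)
  then show "lead_coeff (K n q) = 1"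
    by (simp add: deg)
qed

lemma poly_pderiv_K:
  "poly (pderiv (K n q)) x = of_nat (2 * n) * (1 + x) ^ (2 * n - 1) + q * of_nat n * x ^ (n - 1)"
  by (simp add: K_def pderiv_add pderiv_power pderiv_smult pderiv_monom pderiv_pCons poly_monom)

lemma pderiv_K_at_root:
  assumes "n \<ge> 1" and "poly (K n q) a = 0"
  shows "a * poly (pderiv (K n q)) a = of_nat n * (1 + a) ^ (2 * n - 1) * (a - 1)"
proof -
  define B where "B = (1 + a) ^ (2 * n - 1)"
  define X where "X = a ^ (n - 1)"
  have "(1 + a) ^ (2 * n) = (1 + a) * B" and "a ^ n = a * X"
    unfolding B_def X_def using assms(1) by (simp_all flip: power_Suc)
  then have root: "q * (a * X) = - ((1 + a) * B)"
    using assms(2) by (simp add: poly_K eq_neg_iff_add_eq_0 add.commute)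
  have "a * poly (pderiv (K n q)) a = 2 * of_nat n * a * B + of_nat n * (q * (a * X))"
    unfolding poly_pderiv_K B_def X_def by (simp add: algebra_simps)
  also have "\<dots> = of_nat n * B * (a - 1)"
    unfolding root by (simp add: algebra_simps)
  finally show ?thesis
    unfolding B_def .
qed

lemma prod_pderiv_K_proots:
  assumes "n \<ge> 1"
  shows "(\<Prod>a\<in>#proots (K n q). poly (pderiv (K n q)) a) =
           of_nat n ^ (2 * n) * (q * (-1) ^ n) ^ (2 * n - 1) * (2 ^ (2 * n) + q)"
proof -
  note monic = lead_coeff_K[OF assms] and deg = degree_K[OF assms]
  have "K n q \<noteq> 0"
    using monic[of q] by auto
  have "(\<Prod>a\<in>#proots (K n q). a) = 1"
    using prod_proots_diff[OF monic, of 0] assms by (simp add: deg poly_K)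
  then have "(\<Prod>a\<in>#proots (K n q). poly (pderiv (K n q)) a) =
             (\<Prod>a\<in>#proots (K n q). a * poly (pderiv (K n q)) a)"
    by (simp add: prod_mset.distrib)
  also have "\<dots> = (\<Prod>a\<in>#proots (K n q). of_nat n * ((a - (-1)) ^ (2 * n - 1) * (a - 1)))"
    using \<open>K n q \<noteq> 0\<close> assms
    by (intro arg_cong[where f = prod_mset] image_mset_cong) (auto simp: pderiv_K_at_root add.commute)
  also have "\<dots> = of_nat n ^ (2 * n) *
      ((\<Prod>a\<in>#proots (K n q). a - (-1)) ^ (2 * n - 1) * (\<Prod>a\<in>#proots (K n q). a - 1))"
    by (simp add: prod_mset.distrib prod_mset_power_distrib size_proots_complex deg)
  also have "\<dots> = of_nat n ^ (2 * n) * (q * (-1) ^ n) ^ (2 * n - 1) * (2 ^ (2 * n) + q)"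
    unfolding prod_proots_diff[OF monic] deg using assms by (simp add: poly_K power_0_left)
  finally show ?thesis .
qed

lemma disc_K:
  assumes "n \<ge> 1"
  shows "disc (K n q) = of_nat n ^ (2 * n) * q ^ (2 * n - 1) * (q + 2 ^ (2 * n))"
proof -
  let ?s = "(-1 :: complex) ^ (n * (2 * n - 1))"
  have sign: "2 * n * (2 * n - 1) div 2 = n * (2 * n - 1)"
    by simp
  have "disc (K n q) = ?s * (of_nat n ^ (2 * n) * (q * (-1) ^ n) ^ (2 * n - 1) * (2 ^ (2 * n) + q))"
    unfolding disc_monic_eq_prod_pderiv[OF lead_coeff_K[OF assms]] degree_K[OF assms]
      prod_pderiv_K_proots[OF assms] sign ..
  also have "\<dots> = (?s * ?s) * of_nat n ^ (2 * n) * q ^ (2 * n - 1) * (q + 2 ^ (2 * n))"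
    by (simp add: power_mult_distrib power_mult mult_ac add.commute)
  also have "?s * ?s = 1"
    by (simp flip: power_mult_distrib)
  finally show ?thesis
    by simp
qed

lemma linear_mult_f: "[:-1, 1:] * f m = monom 1 (2 * m + 1) - 1"
proof -
  have "[:-1, 1:] dvd (monom 1 (2 * m + 1) - 1 :: complex poly)"
    by (rule poly_eq_0_iff_dvd[THEN iffD1]) (simp add: poly_monom)
  then show ?thesis
    unfolding f_def by (rule dvd_mult_div_cancel)
qed

lemma
  shows degree_f: "degree (f m) = 2 * m"
    and lead_coeff_f: "lead_coeff (f m) = 1"
proof -
  have deg: "degree (monom 1 (2 * m + 1) - 1 :: complex poly) = 2 * m + 1"
    by (subst diff_conv_add_uminus, subst degree_add_eq_left) (simp_all add: degree_monom_eq)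
  then have "f m \<noteq> 0"
    using linear_mult_f[of m] by auto
  then have "degree ([:-1, 1:] * f m) = degree (f m) + 1"
    by (subst degree_mult_eq) auto
  then show "degree (f m) = 2 * m"
    using deg by (simp only: linear_mult_f)
  have "lead_coeff (f m) = lead_coeff ([:-1, 1:] * f m)"
    by (simp only: lead_coeff_mult) simp
  also have "\<dots> = 1"
    unfolding linear_mult_f using deg by simp
  finally show "lead_coeff (f m) = 1" .
qed

lemma poly_f_0: "poly (f m) 0 = 1"
  using arg_cong[OF linear_mult_f[of m], of "\<lambda>p. poly p 0"] by (simp add: poly_monom)

lemma f_pderiv_identity:
  "(x - 1) * poly (pderiv (f m)) x + poly (f m) x = of_nat (2 * m + 1) * x ^ (2 * m)"
proof -
  have "pderiv [:-1, 1 :: complex:] = 1"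
    by (simp add: pderiv_pCons)
  then have "[:-1, 1:] * pderiv (f m) + f m = pderiv ([:-1, 1:] * f m)"
    by (simp only: pderiv_mult mult_1_right)
  also have "\<dots> = monom (of_nat (2 * m + 1)) (2 * m)"
    unfolding linear_mult_f by (simp add: pderiv_diff pderiv_monom)
  finally have "[:-1, 1:] * pderiv (f m) + f m = monom (of_nat (2 * m + 1)) (2 * m)" .
  from arg_cong[OF this, of "\<lambda>p. poly p x"] show ?thesis
    by (simp add: poly_monom algebra_simps)
qed

lemma prod_mset_proots_f: "prod_mset (proots (f m)) = 1"
  using prod_proots_diff[OF lead_coeff_f, of 0 m] by (simp add: degree_f poly_f_0)

lemma prod_pderiv_f_proots:
  assumes "m \<ge> 1"
  shows "(\<Prod>b\<in>#proots (f m). poly (pderiv (f m)) b) = of_nat (2 * m + 1) ^ (2 * m - 1)"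
proof -
  let ?N = "of_nat (2 * m + 1) :: complex"
  note monic = lead_coeff_f[of m]
  then have "f m \<noteq> 0"
    by auto
  have "?N * (\<Prod>b\<in>#proots (f m). poly (pderiv (f m)) b) =
        (\<Prod>b\<in>#proots (f m). (b - 1) * poly (pderiv (f m)) b)"
    using prod_proots_diff[OF monic, of 1] f_pderiv_identity[of 1 m]
    by (simp add: prod_mset.distrib degree_f)
  also have "\<dots> = (\<Prod>b\<in>#proots (f m). ?N * b ^ (2 * m))"
  proof (intro arg_cong[where f = prod_mset] image_mset_cong)
    fix b
    assume "b \<in># proots (f m)"
    then have "poly (f m) b = 0"
      using \<open>f m \<noteq> 0\<close> by simp
    then show "(b - 1) * poly (pderiv (f m)) b = ?N * b ^ (2 * m)"
      using f_pderiv_identity[of b m] by simp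
  qed
  also have "\<dots> = ?N * ?N ^ (2 * m - 1)"
    using assms by (simp add: prod_mset.distrib prod_mset_power_distrib prod_mset_proots_f
        size_proots_complex degree_f flip: power_Suc)
  finally show ?thesis
    using of_nat_eq_0_iff[where ?'a = complex, of "2 * m + 1"] by simp
qed

lemma disc_f:
  assumes "m \<ge> 1"
  shows "disc (f m) = (-1) ^ m * of_nat (2 * m + 1) ^ (2 * m - 1)"
proof -
  have sign: "2 * m * (2 * m - 1) div 2 = m * (2 * m - 1)"
    by simp
  have "(-1 :: complex) ^ (m * (2 * m - 1)) = (-1) ^ m"
    using assms by (simp add: minus_one_power_iff)
  then show ?thesis
    unfolding disc_monic_eq_prod_pderiv[OF lead_coeff_f] degree_f prod_pderiv_f_proots[OF assms] sign
    by simp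
qed

lemma bij_betw_cis_theta:
  "bij_betw (\<lambda>k. cis (real k * theta m)) {1..2 * m} {z. z ^ (2 * m + 1) = 1 \<and> z \<noteq> 1}"
proof -
  have "(\<lambda>k. cis (2 * pi * real k / real (2 * m + 1))) = (\<lambda>k. cis (real k * theta m))"
    by (simp add: theta_def field_simps)
  then have "bij_betw (\<lambda>k. cis (real k * theta m)) {..<2 * m + 1} {z. z ^ (2 * m + 1) = 1}"
    using bij_betw_roots_unity[of "2 * m + 1"] by simp
  then have "bij_betw (\<lambda>k. cis (real k * theta m))
      ({..<2 * m + 1} - {0}) ({z. z ^ (2 * m + 1) = 1} - {1})"
    by (rule bij_betw_DiffI) auto
  moreover have "{..<2 * m + 1} - {0} = {1..2 * m}"
    by auto
  ultimately show ?thesis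
    by (simp add: set_diff_eq)
qed

lemma proots_f: "proots (f m) = mset_set {z. z ^ (2 * m + 1) = 1 \<and> z \<noteq> 1}"
proof (rule proots_eq_mset_set)
  show "f m \<noteq> 0"
    using lead_coeff_f[of m] by auto
  show "finite {z. z ^ (2 * m + 1) = 1 \<and> z \<noteq> (1 :: complex)}"
    using bij_betw_finite[OF bij_betw_cis_theta] by simp
  show "card {z. z ^ (2 * m + 1) = 1 \<and> z \<noteq> (1 :: complex)} = degree (f m)"
    using bij_betw_same_card[OF bij_betw_cis_theta] by (simp add: degree_f)
  fix z :: complex
  assume z: "z \<in> {z. z ^ (2 * m + 1) = 1 \<and> z \<noteq> 1}"
  have "(z - 1) * poly (f m) z = poly ([:-1, 1:] * f m) z"
    by (simp add: algebra_simps)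
  also have "\<dots> = 0"
    unfolding linear_mult_f using z by (simp add: poly_monom)
  finally show "poly (f m) z = 0"
    using z by simp
qed

lemma prod_proots_f:
  "(\<Prod>b\<in>#proots (f m). g b) = (\<Prod>k = 1..2 * m. g (cis (real k * theta m)))"
  unfolding proots_f prod_unfold_prod_mset[symmetric]
  by (rule prod.reindex_bij_betw[OF bij_betw_cis_theta, symmetric])

lemma one_plus_cis_squared: "(1 + cis t) ^ 2 = cis t * complex_of_real (2 * cos t + 2)"
proof -
  have "(sin t)\<^sup>2 = 1 - (cos t)\<^sup>2"
    by (simp add: sin_squared_eq)
  then show ?thesis
    by (simp add: complex_eq_iff power2_eq_square algebra_simps)
qed

lemma poly_K_cis: "poly (K n q) (cis t) = cis t ^ n * (q + complex_of_real ((2 * cos t + 2) ^ n))"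
proof -
  have "(1 + cis t) ^ (2 * n) = cis t ^ n * complex_of_real ((2 * cos t + 2) ^ n)"
    unfolding power_mult one_plus_cis_squared power_mult_distrib of_real_power ..
  then show ?thesis
    by (simp add: poly_K algebra_simps)
qed

lemma prod_mirror_eq_square:
  fixes h :: "nat \<Rightarrow> 'a::comm_monoid_mult"
  assumes "\<And>k. 1 \<le> k \<Longrightarrow> k \<le> m \<Longrightarrow> h (2 * m + 1 - k) = h k"
  shows "(\<Prod>k = 1..2 * m. h k) = (\<Prod>k = 1..m. h k) ^ 2"
proof -
  have "(\<Prod>k = 1..m + m. h k) = (\<Prod>k = 1..m. h k) * (\<Prod>k = m + 1..m + m. h k)"
    by (rule prod.ub_add_nat) simp
  also have "(\<Prod>k = m + 1..m + m. h k) = (\<Prod>k = 1..m. h (2 * m + 1 - k))"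
    by (rule prod.reindex_bij_witness[of _ "\<lambda>k. 2 * m + 1 - k" "\<lambda>k. 2 * m + 1 - k"]) auto
  also have "\<dots> = (\<Prod>k = 1..m. h k)"
    using assms by (intro prod.cong) auto
  finally show ?thesis
    by (simp add: mult_2 power2_eq_square)
qed

lemma prod_poly_K_proots_f: "(\<Prod>b\<in>#proots (f m). poly (K n q) b) = H m n q ^ 2"
proof -
  define h where "h k = q + complex_of_real ((2 * cos (real k * theta m) + 2) ^ n)" for k
  have "(\<Prod>k = 1..2 * m. cis (real k * theta m)) = 1"
    using prod_proots_f[of "\<lambda>b. b" m] prod_mset_proots_f[of m] by simp
  moreover have "(\<Prod>b\<in>#proots (f m). poly (K n q) b) =
      (\<Prod>k = 1..2 * m. cis (real k * theta m)) ^ n * (\<Prod>k = 1..2 * m. h k)"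
    unfolding prod_proots_f poly_K_cis h_def prod.distrib prod_power_distrib ..
  ultimately have "(\<Prod>b\<in>#proots (f m). poly (K n q) b) = (\<Prod>k = 1..2 * m. h k)"
    by simp
  also have "\<dots> = (\<Prod>k = 1..m. h k) ^ 2"
  proof (rule prod_mirror_eq_square)
    fix k
    assume "1 \<le> k" "k \<le> m"
    then have "real (2 * m + 1 - k) * theta m = 2 * pi - real k * theta m"
      by (simp add: theta_def of_nat_diff field_simps)
    then show "h (2 * m + 1 - k) = h k"
      by (simp add: h_def)
  qed
  finally show ?thesis
    by (simp add: H_def h_def)
qed

theorem proposition2p3:
  fixes n m :: nat and q :: complex
  assumes "n \<ge> 1" and "m \<ge> 1"
  shows "disc (K n q * f m) =
           C m n * q ^ (2 * n - 1) * (q + 2 ^ (2 * n)) *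
             (\<Prod>k = 1..m. q + complex_of_real ((2 * cos (real k * theta m) + 2) ^ n)) ^ 4
         \<and> disc (K n q * f m) = C m n * q ^ (2 * n - 1) * (q + 2 ^ (2 * n)) * H m n q ^ 4"
proof -
  have "(\<Prod>a\<in>#proots (K n q). poly (f m) a) = H m n q ^ 2"
    using prod_poly_proots_swap[OF lead_coeff_K[OF assms(1)] lead_coeff_f]
    by (simp add: degree_K[OF assms(1)] degree_f prod_poly_K_proots_f)
  then have "disc (K n q * f m) = disc (K n q) * disc (f m) * H m n q ^ 4"
    using disc_mult_monic[OF lead_coeff_K[OF assms(1)] lead_coeff_f] by (simp flip: power_mult)
  also have "\<dots> = C m n * q ^ (2 * n - 1) * (q + 2 ^ (2 * n)) * H m n q ^ 4"
    unfolding disc_K[OF assms(1)] disc_f[OF assms(2)] C_def by (simp add: mult_ac)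
  finally show ?thesis
    by (simp add: H_def)
qed

end
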